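(* Let $r_1,r_2\in(0,1)$, $a_1,a_2\in(1,\infty)$, and for $i=1,2$ let $l_i$ be Lebesgue measurable, integrable, with $\int_{\mathbb{R}}l_i=1$, $\int_{\mathbb{R}}l_i(y)e^{\lambda y}dy<\infty$ for all $\lambda\in\mathbb{R}$, and $l_i(y)=l_i(-y)\ge0$. Define $Q=(Q_1,Q_2)$ on $\mathcal{C}_{[\theta,\mathbf{1}]}$ by \[ Q_1(\phi,\psi)(t)=1-\int_{\mathbb{R}}(1-\phi (y))e^{r_{1}(\phi (y)-a_{1}\psi(y))}l_{1}(t-y)\,dy,\quad Q_2(\phi,\psi)(t)=\int_{\mathbb{R}} \psi (y)e^{r_{2}(1-a_2-\psi (y)+a_{2}\phi (y))}l_{2}(t-y)\,dy. \] Then the fixed points $\theta=(0,0)$ and $M=(1,1)$ are strongly stable from above and below, respectively: there exist $\delta>0$ and unit vectors $E_4,E_5\in\mathbb{R}^2$ with $\theta\ll E_4,E_5\ll\mathbf{1}$ such that \[ Q[\eta E_4]\ll \eta E_4,\qquad Q[M-\eta E_5]\gg M-\eta E_5\qquad\text{for all }\eta\in(0,\delta] \] (constant vectors regarded as constant functions). Moreover, the set $F\setminus\{\theta,M\}$ is totally unordered, where $F$ is the set of constant fixed points of $Q$ with values in $[\theta,M]$.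
   Context: $\mathcal{C}$ is the space of uniformly continuous bounded functions $\mathbb{R}\to\mathbb{R}^2$ with the componentwise order; $\mathcal{C}_{[\theta,\mathbf{1}]}=\{U\in\mathcal{C}: (0,0)\le U(x)\le (1,1)\ \forall x\}$. For $U=(u_1,u_2),V=(v_1,v_2)$, $U\gg V$ means $u_i(x)>v_i(x)$ for $i=1,2$ and all $x$ (and $U\ll V$ analogously). A set is totally unordered if no two distinct elements are comparable in the componentwise order. *)

theory Defs
  imports "HOL-Analysis.Analysis"
begin

text \<open>Functions R -> R^2 are represented as real \<Rightarrow> real \<times> real, componentwise order.\<close>

definition strict_below :: "(real \<Rightarrow> real \<times> real) \<Rightarrow> (real \<Rightarrow> real \<times> real) \<Rightarrow> bool"
  (infix "\<lless>" 50) where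
  "U \<lless> V \<longleftrightarrow> (\<forall>x. fst (U x) < fst (V x) \<and> snd (U x) < snd (V x))"

definition const_fun :: "real \<times> real \<Rightarrow> (real \<Rightarrow> real \<times> real)" where
  "const_fun E = (\<lambda>_. E)"

definition Qop :: "real \<Rightarrow> real \<Rightarrow> real \<Rightarrow> real \<Rightarrow> (real \<Rightarrow> real) \<Rightarrow> (real \<Rightarrow> real)
    \<Rightarrow> (real \<Rightarrow> real \<times> real) \<Rightarrow> (real \<Rightarrow> real \<times> real)" where
  "Qop r1 r2 a1 a2 l1 l2 U = (\<lambda>t.
     (1 - (LINT y|lebesgue. (1 - fst (U y)) * exp (r1 * (fst (U y) - a1 * snd (U y))) * l1 (t - y)),
      (LINT y|lebesgue. snd (U y) * exp (r2 * (1 - a2 - snd (U y) + a2 * fst (U y))) * l2 (t - y))))"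

definition const_fixed_points :: "real \<Rightarrow> real \<Rightarrow> real \<Rightarrow> real \<Rightarrow> (real \<Rightarrow> real) \<Rightarrow> (real \<Rightarrow> real)
    \<Rightarrow> (real \<times> real) set" where
  "const_fixed_points r1 r2 a1 a2 l1 l2 =
     {E. 0 \<le> fst E \<and> fst E \<le> 1 \<and> 0 \<le> snd E \<and> snd E \<le> 1 \<and>
         Qop r1 r2 a1 a2 l1 l2 (const_fun E) = const_fun E}"

definition totally_unordered :: "(real \<times> real) set \<Rightarrow> bool" where
  "totally_unordered S \<longleftrightarrow>
     (\<forall>p\<in>S. \<forall>q\<in>S. p \<noteq> q \<longrightarrow> \<not> (fst p \<le> fst q \<and> snd p \<le> snd q))"

definition kernel_ok :: "(real \<Rightarrow> real) \<Rightarrow> bool" where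
  "kernel_ok l \<longleftrightarrow> l \<in> borel_measurable lebesgue \<and> integrable lebesgue l \<and>
     (LINT y|lebesgue. l y) = 1 \<and>
     (\<forall>c::real. integrable lebesgue (\<lambda>y. l y * exp (c * y))) \<and>
     (\<forall>y. l y = l (- y) \<and> 0 \<le> l y)"

end

theory Submission
  imports Defs
begin

text \<open>Since each kernel has unit mass, Q acts on constants as the planar map Qconst.
  Near \<theta>, along E4 \<sim> (2 a1, 1) the exponent of the first component is positive and that of the
  second negative, so both components decrease. The involution (u, v) \<mapsto> (1 - v, 1 - u)
  conjugates Qconst to the same map with the parameter pairs (r1, a1), (r2, a2) exchanged; it
  sends M to \<theta> and M - \<eta> sgn (1, 2 a2) to \<eta> sgn (2 a2, 1), so stability of M from below is the
  stability of \<theta> from above for the exchanged map. Finally, a constant fixed point satisfies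
  (u = 1 or u = a1 v) and (v = 0 or v = 1 - a2 + a2 u), so besides \<theta> and M it is (1, 0) or the
  unique coexistence point, and these two are incomparable.\<close>

definition Qconst :: "real \<Rightarrow> real \<Rightarrow> real \<Rightarrow> real \<Rightarrow> real \<times> real \<Rightarrow> real \<times> real" where
  "Qconst r1 r2 a1 a2 p =
     (1 - (1 - fst p) * exp (r1 * (fst p - a1 * snd p)),
      snd p * exp (r2 * (1 - a2 - snd p + a2 * fst p)))"

lemma kernel_ok_integral_reflected_shift:
  assumes "kernel_ok l"
  shows "(LINT y|lebesgue. l (t - y)) = 1"
proof -
  have "(LINT y|lebesgue. l (t + (-1) * y)) = (LINT y|lebesgue. l y)"
    using lebesgue_integral_real_affine[of "-1" l t] by simp
  with assms show ?thesis by (simp add: kernel_ok_def)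
qed

lemma Qop_const_fun:
  assumes "kernel_ok l1" "kernel_ok l2"
  shows "Qop r1 r2 a1 a2 l1 l2 (const_fun p) = const_fun (Qconst r1 r2 a1 a2 p)"
  by (simp add: Qop_def Qconst_def const_fun_def
      kernel_ok_integral_reflected_shift[OF assms(1)] kernel_ok_integral_reflected_shift[OF assms(2)])

lemma const_fun_strict_below_iff:
  "const_fun p \<lless> const_fun q \<longleftrightarrow> fst p < fst q \<and> snd p < snd q"
  by (simp add: strict_below_def const_fun_def)

lemma Qconst_reflect:
  "(1, 1) - prod.swap (Qconst r1 r2 a1 a2 p) = Qconst r2 r1 a2 a1 ((1, 1) - prod.swap p)"
  by (simp add: Qconst_def algebra_simps)

lemma Qconst_strict_below:
  assumes "0 < r1" "0 < r2" "0 < y" "a1 * y < x" "x < 1" "a2 * x < a2 - 1"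
  shows "fst (Qconst r1 r2 a1 a2 (x, y)) < x \<and> snd (Qconst r1 r2 a1 a2 (x, y)) < y"
proof -
  have "1 < exp (r1 * (x - a1 * y))" using assms(1,4) by simp
  then have first: "1 - x < (1 - x) * exp (r1 * (x - a1 * y))" using assms(5) by simp
  have "exp (r2 * (1 - a2 - y + a2 * x)) < 1"
    using assms(2,3,6) by (simp add: mult_pos_neg)
  then have second: "y * exp (r2 * (1 - a2 - y + a2 * x)) < y" using assms(3) by simp
  from first second show ?thesis by (simp add: Qconst_def)
qed

lemma sgn_Pair: "sgn (a, b) = (a / norm (a, b), b / norm (a, b))"
  by (simp add: sgn_div_norm scaleR_Pair divide_inverse mult.commute)

lemma sgn_Pair_in_open_unit_square:
  fixes a b :: real
  assumes "0 < a" "0 < b"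
  shows "0 < fst (sgn (a, b)) \<and> fst (sgn (a, b)) < 1 \<and> 0 < snd (sgn (a, b)) \<and> snd (sgn (a, b)) < 1"
proof -
  have "a < norm (a, b)" "b < norm (a, b)"
    using assms by (auto simp: norm_Pair intro!: real_less_rsqrt)
  moreover have "0 < norm (a, b)" using calculation assms by linarith
  ultimately show ?thesis using assms by (simp add: sgn_Pair divide_less_eq_1)
qed

lemma Qconst_stable_above_zero:
  assumes "0 < r1" "0 < r2" "0 < a1" "0 < \<eta>" "\<eta> \<le> (a2 - 1) / a2" "1 < a2"
  defines "p \<equiv> \<eta> *\<^sub>R sgn (2 * a1, 1 :: real)"
  shows "fst (Qconst r1 r2 a1 a2 p) < fst p \<and> snd (Qconst r1 r2 a1 a2 p) < snd p"
proof -
  define n where "n = norm (2 * a1, 1 :: real)"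
  have p: "p = (\<eta> * (2 * a1 / n), \<eta> / n)" and "0 < n"
    by (simp_all add: p_def n_def sgn_Pair zero_prod_def)
  have "fst (sgn (2 * a1, 1 :: real)) < 1"
    using sgn_Pair_in_open_unit_square[of "2 * a1" 1] assms(3) by simp
  then have "fst p < \<eta>" using assms(4) by (simp add: p_def)
  also have "\<eta> \<le> (a2 - 1) / a2" by (fact assms(5))
  finally have "a2 * fst p < a2 - 1" using assms(6) by (simp add: field_simps)
  moreover from this have "fst p < 1"
    using assms(6) mult_less_cancel_left_pos[of a2 "fst p" 1] by linarith
  moreover have "0 < snd p" "a1 * snd p < fst p"
    using \<open>0 < n\<close> assms(3,4) by (simp_all add: p field_simps)
  ultimately show ?thesis
    using Qconst_strict_below[OF assms(1,2), of "snd p" a1 "fst p" a2] by simp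
qed

lemma Qconst_stable_below_one:
  assumes "0 < r1" "0 < r2" "0 < a2" "0 < \<eta>" "\<eta> \<le> (a1 - 1) / a1" "1 < a1"
  defines "p \<equiv> (1, 1) - \<eta> *\<^sub>R sgn (1, 2 * a2)"
  shows "fst p < fst (Qconst r1 r2 a1 a2 p) \<and> snd p < snd (Qconst r1 r2 a1 a2 p)"
proof -
  have "(1, 1) - prod.swap p = \<eta> *\<^sub>R sgn (2 * a2, 1)"
    by (simp add: p_def sgn_Pair norm_Pair add.commute)
  then have "fst ((1, 1) - prod.swap (Qconst r1 r2 a1 a2 p)) < fst ((1, 1) - prod.swap p) \<and>
      snd ((1, 1) - prod.swap (Qconst r1 r2 a1 a2 p)) < snd ((1, 1) - prod.swap p)"
    unfolding Qconst_reflect using Qconst_stable_above_zero[OF assms(2,1,3-6)] by simp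
  then show ?thesis by (simp add: fst_diff snd_diff)
qed

lemma Qconst_fixed_point_cases:
  assumes "0 < r1" "0 < r2" "Qconst r1 r2 a1 a2 (u, v) = (u, v)"
  shows "(u = 1 \<or> u = a1 * v) \<and> (v = 0 \<or> v = 1 - a2 + a2 * u)"
proof -
  have "1 - (1 - u) * exp (r1 * (u - a1 * v)) = u" "v * exp (r2 * (1 - a2 - v + a2 * u)) = v"
    using assms(3) by (simp_all add: Qconst_def)
  then have "(1 - u) * exp (r1 * (u - a1 * v)) = 1 - u" "v * exp (r2 * (1 - a2 - v + a2 * u)) = v"
    by linarith+
  then have "u = 1 \<or> r1 * (u - a1 * v) = 0" "v = 0 \<or> r2 * (1 - a2 - v + a2 * u) = 0"
    by (simp_all add: mult_cancel_left1)
  then show ?thesis using assms(1,2) by auto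
qed

lemma const_fixed_points_nontrivial:
  assumes "0 < r1" "0 < r2" "kernel_ok l1" "kernel_ok l2" "1 < a2"
  shows "const_fixed_points r1 r2 a1 a2 l1 l2 - {(0, 0), (1, 1)} \<subseteq>
    {(1, 0), (a1 * ((a2 - 1) / (a1 * a2 - 1)), (a2 - 1) / (a1 * a2 - 1))}"
proof
  fix p assume p: "p \<in> const_fixed_points r1 r2 a1 a2 l1 l2 - {(0, 0), (1, 1)}"
  obtain u v where uv: "p = (u, v)" by fastforce
  have "const_fun (Qconst r1 r2 a1 a2 (u, v)) = const_fun (u, v)"
    using p by (simp add: uv const_fixed_points_def Qop_const_fun[OF assms(3,4)])
  then have "Qconst r1 r2 a1 a2 (u, v) = (u, v)" by (metis const_fun_def)
  then have cases: "(u = 1 \<or> u = a1 * v) \<and> (v = 0 \<or> v = 1 - a2 + a2 * u)"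
    using Qconst_fixed_point_cases[OF assms(1,2)] by blast
  have coexistence: "(u, v) = (a1 * ((a2 - 1) / (a1 * a2 - 1)), (a2 - 1) / (a1 * a2 - 1))"
    if "u = a1 * v" "v = 1 - a2 + a2 * u"
  proof -
    have "v * (a1 * a2 - 1) = a2 - 1" using that(2) unfolding that(1) by (simp add: algebra_simps)
    moreover have "a1 * a2 \<noteq> 1" using calculation assms(5) by auto
    ultimately show ?thesis using that(1) by (simp add: eq_divide_eq)
  qed
  have "p = (1, 0) \<or> (u = a1 * v \<and> v = 1 - a2 + a2 * u)"
    using cases p by (auto simp: uv)
  then show "p \<in> {(1, 0), (a1 * ((a2 - 1) / (a1 * a2 - 1)), (a2 - 1) / (a1 * a2 - 1))}"
    using coexistence uv by blast
qed

lemma totally_unordered_subset: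
  "totally_unordered T \<Longrightarrow> S \<subseteq> T \<Longrightarrow> totally_unordered S"
  unfolding totally_unordered_def by blast

lemma totally_unordered_boundary_coexistence:
  fixes a1 a2 :: real
  assumes "1 < a1" "1 < a2"
  shows "totally_unordered {(1, 0), (a1 * ((a2 - 1) / (a1 * a2 - 1)), (a2 - 1) / (a1 * a2 - 1))}"
proof -
  define c where "c = (a2 - 1) / (a1 * a2 - 1)"
  have "1 < a1 * a2" using assms by (simp add: less_1_mult)
  then have "0 < c" "a1 * c < 1"
    using assms by (simp_all add: c_def field_simps)
  then show ?thesis by (auto simp: totally_unordered_def c_def[symmetric])
qed

theorem lemma4:
  fixes r1 r2 a1 a2 :: real and l1 l2 :: "real \<Rightarrow> real"
  assumes "0 < r1" "r1 < 1" "0 < r2" "r2 < 1" "1 < a1" "1 < a2"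
    and "kernel_ok l1" and "kernel_ok l2"
  shows "(\<exists>\<delta>>0. \<exists>E4 E5 :: real \<times> real.
            0 < fst E4 \<and> fst E4 < 1 \<and> 0 < snd E4 \<and> snd E4 < 1 \<and> norm E4 = 1 \<and>
            0 < fst E5 \<and> fst E5 < 1 \<and> 0 < snd E5 \<and> snd E5 < 1 \<and> norm E5 = 1 \<and>
            (\<forall>\<eta>. 0 < \<eta> \<and> \<eta> \<le> \<delta> \<longrightarrow>
               Qop r1 r2 a1 a2 l1 l2 (const_fun (\<eta> *\<^sub>R E4)) \<lless> const_fun (\<eta> *\<^sub>R E4) \<and>
               const_fun ((1, 1) - \<eta> *\<^sub>R E5) \<lless> Qop r1 r2 a1 a2 l1 l2 (const_fun ((1, 1) - \<eta> *\<^sub>R E5))))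
         \<and> totally_unordered (const_fixed_points r1 r2 a1 a2 l1 l2 - {(0, 0), (1, 1)})"
proof -
  define \<delta> where "\<delta> = min ((a2 - 1) / a2) ((a1 - 1) / a1)"
  define E4 where "E4 = sgn (2 * a1, 1 :: real)"
  define E5 where "E5 = sgn (1 :: real, 2 * a2)"
  have "0 < \<delta>" using assms(5,6) by (simp add: \<delta>_def)
  moreover have "norm E4 = 1" "norm E5 = 1"
    by (simp_all add: E4_def E5_def norm_sgn zero_prod_def)
  moreover have "0 < fst E4 \<and> fst E4 < 1 \<and> 0 < snd E4 \<and> snd E4 < 1"
    "0 < fst E5 \<and> fst E5 < 1 \<and> 0 < snd E5 \<and> snd E5 < 1"
    using sgn_Pair_in_open_unit_square assms(5,6) by (simp_all add: E4_def E5_def)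
  moreover have
    "Qop r1 r2 a1 a2 l1 l2 (const_fun (\<eta> *\<^sub>R E4)) \<lless> const_fun (\<eta> *\<^sub>R E4) \<and>
     const_fun ((1, 1) - \<eta> *\<^sub>R E5) \<lless> Qop r1 r2 a1 a2 l1 l2 (const_fun ((1, 1) - \<eta> *\<^sub>R E5))"
    if "0 < \<eta>" "\<eta> \<le> \<delta>" for \<eta>
    using that assms Qconst_stable_above_zero[of r1 r2 a1 \<eta> a2] Qconst_stable_below_one[of r1 r2 a2 \<eta> a1]
    by (simp add: Qop_const_fun const_fun_strict_below_iff E4_def E5_def \<delta>_def)
  moreover have "totally_unordered (const_fixed_points r1 r2 a1 a2 l1 l2 - {(0, 0), (1, 1)})"
    using totally_unordered_subset[OF totally_unordered_boundary_coexistence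
        const_fixed_points_nontrivial] assms by blast
  ultimately show ?thesis by blast
qed

end
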